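(* Let $C$ be a nonempty subset of a Hilbert space $H$ and let $\mathcal{S}=\{T_s:s\in S\}$ be a representation of a semigroup $S$ on $C$. If $A_C(\mathcal{S})\neq\emptyset$, then $A_C(\mathcal{S})$ is closed and convex.
   Context: A representation is a family of maps $T_s:C\to C$ with $T_{st}=T_s\circ T_t$. $A_C(\mathcal{S})$ is the set of all $a\in H$ with $\|a-T_sx\|\le\|a-x\|$ for all $x\in C$ and $s\in S$. *)

theory Defs
  imports "HOL-Analysis.Analysis"
begin

definition representation :: "'a set \<Rightarrow> ('s::semigroup_mult \<Rightarrow> 'a \<Rightarrow> 'a) \<Rightarrow> bool" where
  "representation C T \<longleftrightarrow>
     (\<forall>s. \<forall>x\<in>C. T s x \<in> C) \<and> (\<forall>s t. \<forall>x\<in>C. T (s * t) x = T s (T t x))"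

definition attractive_points :: "'a::real_normed_vector set \<Rightarrow> ('s \<Rightarrow> 'a \<Rightarrow> 'a) \<Rightarrow> 'a set" where
  "attractive_points C T = {a. \<forall>x\<in>C. \<forall>s. norm (a - T s x) \<le> norm (a - x)}"

end

theory Submission
  imports Defs
begin

text \<open>Squaring removes the quadratic term in \<open>a\<close>: the condition
  \<open>\<parallel>a - T s x\<parallel> \<le> \<parallel>a - x\<parallel>\<close> is a linear inequality in \<open>a\<close>, so the set of attractive
  points is an intersection of closed half-spaces. This holds in every real inner product
  space.\<close>

lemma norm_diff_le_norm_diff_iff_inner_le:
  fixes a x y :: "'a::real_inner"
  shows "norm (a - y) \<le> norm (a - x) \<longleftrightarrow> inner (2 *\<^sub>R (x - y)) a \<le> (norm x)\<^sup>2 - (norm y)\<^sup>2"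
proof -
  have "norm (a - y) \<le> norm (a - x) \<longleftrightarrow> (norm (a - y))\<^sup>2 \<le> (norm (a - x))\<^sup>2"
    by (simp add: norm_le_square power2_norm_eq_inner)
  also have "\<dots> \<longleftrightarrow> inner (2 *\<^sub>R (x - y)) a \<le> (norm x)\<^sup>2 - (norm y)\<^sup>2"
    by (simp add: power2_norm_eq_inner inner_diff_left inner_diff_right inner_commute
        algebra_simps)
  finally show ?thesis .
qed

lemma attractive_points_eq_INT_halfspaces:
  fixes C :: "'a::real_inner set"
  shows "attractive_points C T =
    (\<Inter>x\<in>C. \<Inter>s. {a. inner (2 *\<^sub>R (x - T s x)) a \<le> (norm x)\<^sup>2 - (norm (T s x))\<^sup>2})"
  unfolding attractive_points_def by (auto simp: norm_diff_le_norm_diff_iff_inner_le)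

lemma closed_attractive_points:
  fixes C :: "'a::real_inner set"
  shows "closed (attractive_points C T)"
  unfolding attractive_points_eq_INT_halfspaces
  by (intro closed_INT ballI closed_halfspace_le)

lemma convex_attractive_points:
  fixes C :: "'a::real_inner set"
  shows "convex (attractive_points C T)"
  unfolding attractive_points_eq_INT_halfspaces
  by (intro convex_INT ballI allI convex_halfspace_le)

theorem lemma4p9:
  fixes C :: "'a::{real_inner, complete_space} set"
    and T :: "'s::semigroup_mult \<Rightarrow> 'a \<Rightarrow> 'a"
  assumes "C \<noteq> {}"
    and "representation C T"
    and "attractive_points C T \<noteq> {}"
  shows "closed (attractive_points C T) \<and> convex (attractive_points C T)"
  using closed_attractive_points convex_attractive_points by blast

end
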